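(* Let $k,\ell\in\mathbb{R}$ and fix $0<T\le1$. There are constants $N_0,c>0$ (independent of $N$) such that for all dyadic $N\ge N_0$ there exists $u_N\in H^k(\mathbb{R}^2)$ with $$\sup_{|t|\le T}\Big\|\int_0^te^{-i(t-t')\langle\nabla\rangle}\frac{\Delta}{\langle\nabla\rangle}\Big(e^{it'\Delta}u_N\,\overline{e^{it'\Delta}u_N}\Big)dt'\Big\|_{H^\ell}\ge c\,N^{\ell-2k+\frac12}\|u_N\|_{H^k}^2.$$
   Context: $\langle\nabla\rangle=(1-\Delta)^{1/2}$; $e^{it\Delta}$ and $e^{-it\langle\nabla\rangle}$ are the Fourier multipliers $e^{-it|\xi|^2}$ and $e^{-it\langle\xi\rangle}$ on $\mathbb{R}^2$, $\langle\xi\rangle=(1+|\xi|^2)^{1/2}$. *)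

theory Defs
  imports "HOL-Analysis.Analysis"
begin

(* Functions on R^2 are represented on the Fourier side: a function u is given by
   its Fourier transform  uhat xi = \<integral> u(x) e^{-i x.xi} dx,  xi :: real^2. *)

definition japbr :: "real^2 \<Rightarrow> real" where
  "japbr \<xi> = sqrt (1 + (norm \<xi>)\<^sup>2)"

definition in_H :: "real \<Rightarrow> (real^2 \<Rightarrow> complex) \<Rightarrow> bool" where
  "in_H \<sigma> uhat \<longleftrightarrow> uhat \<in> borel_measurable lborel \<and>
     integrable lborel (\<lambda>\<xi>. (japbr \<xi> powr (2*\<sigma>)) * (cmod (uhat \<xi>) ^ 2))"

definition sob_norm :: "real \<Rightarrow> (real^2 \<Rightarrow> complex) \<Rightarrow> real" where
  "sob_norm \<sigma> uhat = sqrt (LINT \<xi>|lborel. (japbr \<xi> powr (2*\<sigma>)) * (cmod (uhat \<xi>) ^ 2))"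

(* Fourier transform of  e^{it Delta}u * conj(e^{it Delta}u)  at xi:
   (2 pi)^{-2} \<integral> e^{-it|eta|^2} uhat(eta) conj(e^{-it|eta-xi|^2} uhat(eta-xi)) d eta *)
definition schr_prod_hat :: "(real^2 \<Rightarrow> complex) \<Rightarrow> real \<Rightarrow> real^2 \<Rightarrow> complex" where
  "schr_prod_hat uhat t \<xi> = complex_of_real (1 / (2*pi)\<^sup>2) *
     (LINT \<eta>|lborel. cis (- t * (norm \<eta>)\<^sup>2) * uhat \<eta> *
        cnj (cis (- t * (norm (\<eta> - \<xi>))\<^sup>2) * uhat (\<eta> - \<xi>)))"

(* Fourier transform of the Duhamel term
   \<integral>_0^t e^{-i(t-t')<nabla>} (Delta/<nabla>) (e^{it'Delta}u conj(e^{it'Delta}u)) dt' *)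
definition duhamel_hat :: "(real^2 \<Rightarrow> complex) \<Rightarrow> real \<Rightarrow> real^2 \<Rightarrow> complex" where
  "duhamel_hat uhat t \<xi> = interval_lebesgue_integral lborel (ereal 0) (ereal t)
     (\<lambda>s. cis (- (t - s) * japbr \<xi>) * complex_of_real (- (norm \<xi>)\<^sup>2 / japbr \<xi>)
          * schr_prod_hat uhat s \<xi>)"

end

theory Submission
  imports Defs
begin

(* Let u_N have Fourier transform the indicator of two thin boxes near (N/2, 0) and (-N/2, 0), of
   size 1/(16N) x 1/4, so that |u_N|_{H^k}^2 ~ N^(2k-1). For xi in a box Xi near (N, 0) of area
   ~ 1/N, every pair eta, eta - xi in the support is in resonant position: the total phase
   <xi> - |eta|^2 + |eta - xi|^2 of the Duhamel integrand is at most 1/2 in modulus. Hence for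
   times up to 1 there is no cancellation, and since the overlap has measure ~ 1/N while the
   multiplier |xi|^2/<xi> is ~ N, the Duhamel term at time T has modulus >~ T on Xi. Thus its
   H^l norm squared is >~ N^(2l) |Xi| ~ N^(2l-1), and the quotient is ~ N^(l-2k+1/2). *)

lemma cis_borel_measurable [measurable]: "cis \<in> borel_measurable borel"
  by (intro borel_measurable_continuous_onI continuous_intros)

lemma cnj_borel_measurable [measurable]: "cnj \<in> borel_measurable borel"
  by (intro borel_measurable_continuous_onI continuous_intros)

lemma japbr_borel_measurable [measurable]: "japbr \<in> borel_measurable borel"
  unfolding japbr_def by measurable

lemma japbr_ge_1: "1 \<le> japbr \<xi>"
  by (simp add: japbr_def)

lemma norm_le_japbr: "norm \<xi> \<le> japbr \<xi>"
  unfolding japbr_def by (rule real_le_rsqrt) simp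

lemma japbr_le_1_plus_norm: "japbr \<xi> \<le> 1 + norm \<xi>"
proof -
  have "japbr \<xi> \<le> sqrt ((1 + norm \<xi>)\<^sup>2)"
    unfolding japbr_def by (intro real_sqrt_le_mono) (simp add: power2_eq_square algebra_simps)
  thus ?thesis by simp
qed

lemma norm_vec2_le_abs_components: "norm (x :: real^2) \<le> \<bar>x$1\<bar> + \<bar>x$2\<bar>"
  using norm_le_l1_cart[of x] by (simp add: sum_2)

lemma cos_ge_half: "\<bar>\<theta>\<bar> \<le> 1/2 \<Longrightarrow> 1/2 \<le> cos (\<theta> :: real)"
proof -
  assume "\<bar>\<theta>\<bar> \<le> 1/2"
  hence "cos (pi/3) \<le> cos \<bar>\<theta>\<bar>" using pi_gt3 by (intro cos_monotone_0_pi_le) auto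
  thus ?thesis by (simp add: cos_60)
qed

lemma norm_cis_mult_of_real_mult: "norm (cis a * complex_of_real r * z) = \<bar>r\<bar> * norm z"
  by (simp add: norm_mult)

lemma powr_comparable_bounds:
  fixes N c x p :: real
  assumes N: "0 < N" and c: "1 \<le> c" and lo: "N / c \<le> x" and hi: "x \<le> c * N"
  shows "N powr p / c powr \<bar>p\<bar> \<le> x powr p" and "x powr p \<le> c powr \<bar>p\<bar> * N powr p"
proof -
  have x: "0 < x" using N c lo by (smt (verit) divide_pos_pos)
  have "ln (N / c) \<le> ln x" using lo N c x by (subst ln_le_cancel_iff) auto
  hence "ln N - ln c \<le> ln x" using N c by (simp add: ln_div)
  moreover have "ln x \<le> ln (c * N)" using hi N c x by (subst ln_le_cancel_iff) auto
  hence "ln x \<le> ln c + ln N" using N c by (simp add: ln_mult)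
  ultimately have "\<bar>p * ln x - p * ln N\<bar> \<le> \<bar>p\<bar> * ln c"
    unfolding right_diff_distrib[symmetric] abs_mult using c by (intro mult_left_mono) auto
  hence "p * ln N - \<bar>p\<bar> * ln c \<le> p * ln x" "p * ln x \<le> \<bar>p\<bar> * ln c + p * ln N" by linarith+
  thus "N powr p / c powr \<bar>p\<bar> \<le> x powr p" "x powr p \<le> c powr \<bar>p\<bar> * N powr p"
    using N c x by (simp_all add: powr_def exp_diff[symmetric] exp_add[symmetric])
qed

lemma integral_ge_mult_measure:
  fixes f :: "'a \<Rightarrow> real"
  assumes f: "integrable M f" and A: "A \<in> sets M" "emeasure M A < \<infinity>"
    and on_A: "\<And>x. x \<in> A \<Longrightarrow> c \<le> f x" and nonneg: "\<And>x. x \<in> space M \<Longrightarrow> 0 \<le> f x"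
  shows "c * measure M A \<le> integral\<^sup>L M f"
proof -
  have "c * measure M A = (\<integral>x. c * indicator A x \<partial>M)"
    using A by simp
  also have "\<dots> \<le> integral\<^sup>L M f"
    using A on_A nonneg by (intro integral_mono f integrable_mult_right integrable_real_indicator)
      (auto simp: indicator_def)
  finally show ?thesis .
qed

lemma Re_integral_ge_mult_measure:
  fixes f :: "'a \<Rightarrow> complex"
  assumes f: "integrable M f" and A: "A \<in> sets M" "emeasure M A < \<infinity>"
    and on_A: "\<And>x. x \<in> A \<Longrightarrow> c \<le> Re (f x)" and nonneg: "\<And>x. x \<in> space M \<Longrightarrow> 0 \<le> Re (f x)"
  shows "c * measure M A \<le> Re (integral\<^sup>L M f)"
  using integral_ge_mult_measure[OF integrable_Re[OF f] A on_A nonneg] integral_Re[OF f] by simp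

lemma norm_integral_le_mult_measure:
  fixes f :: "'a \<Rightarrow> 'b::{banach, second_countable_topology}"
  assumes A: "A \<in> sets M" "emeasure M A < \<infinity>"
    and bound: "\<And>x. x \<in> space M \<Longrightarrow> norm (f x) \<le> c * indicator A x"
  shows "norm (integral\<^sup>L M f) \<le> c * measure M A"
proof -
  have "norm (integral\<^sup>L M f) \<le> (\<integral>x. norm (f x) \<partial>M)"
    by (rule integral_norm_bound)
  also have "\<dots> \<le> (\<integral>x. c * indicator A x \<partial>M)"
    using A bound by (intro integral_mono' integrable_mult_right integrable_real_indicator)
      (auto intro: order_trans[OF norm_ge_zero])
  also have "\<dots> = c * measure M A"
    using A by simp
  finally show ?thesis .
qed

definition rect :: "real \<Rightarrow> real \<Rightarrow> real \<Rightarrow> real \<Rightarrow> (real^2) set" where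
  "rect a b c d = cbox (vector [a, c]) (vector [b, d])"

lemma mem_rect: "x \<in> rect a b c d \<longleftrightarrow> a \<le> x$1 \<and> x$1 \<le> b \<and> c \<le> x$2 \<and> x$2 \<le> d"
  by (auto simp add: rect_def mem_box_cart forall_2)

lemma rect_sets_borel [measurable]: "rect a b c d \<in> sets borel"
  by (simp add: rect_def)

lemma emeasure_rect_finite: "emeasure lborel (rect a b c d) < \<infinity>"
  unfolding rect_def by (rule emeasure_lborel_cbox_finite)

lemma measure_rect:
  assumes "a \<le> b" "c \<le> d"
  shows "measure lborel (rect a b c d) = (b - a) * (d - c)"
proof -
  have "vector [a, c] \<in> rect a b c d" using assms by (simp add: mem_rect)
  hence "rect a b c d \<noteq> {}" by auto
  thus ?thesis unfolding rect_def by (simp add: content_cbox_cart UNIV_2)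
qed

definition box_width :: "real \<Rightarrow> real" where
  "box_width N = 1 / (32 * N)"

(* The shift by 1/2 makes eta_1 + (eta - xi)_1 close to 1 for interacting frequencies, so that
   |eta|^2 - |eta - xi|^2 is close to xi_1, hence to <xi>: the two Schroedinger phases cancel the
   Klein-Gordon phase. *)

definition plus_box :: "real \<Rightarrow> (real^2) set" where
  "plus_box N = rect (N/2 + 1/2) (N/2 + 1/2 + 2 * box_width N) 0 (1/4)"

definition minus_box :: "real \<Rightarrow> (real^2) set" where
  "minus_box N = rect (1/2 - N/2) (1/2 - N/2 + 2 * box_width N) 0 (1/4)"

definition test_support :: "real \<Rightarrow> (real^2) set" where
  "test_support N = plus_box N \<union> minus_box N"

definition test_fn :: "real \<Rightarrow> real^2 \<Rightarrow> complex" where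
  "test_fn N = indicator (test_support N)"

definition resonant_box :: "real \<Rightarrow> (real^2) set" where
  "resonant_box N = rect (N/2 + 1/2 + box_width N) (N/2 + 1/2 + 2 * box_width N) (1/8) (1/4)"

definition output_box :: "real \<Rightarrow> (real^2) set" where
  "output_box N = rect N (N + box_width N) 0 (1/8)"

definition interaction_hull :: "real \<Rightarrow> (real^2) set" where
  "interaction_hull N = rect (- (N + 2)) (N + 2) (- 1) 1"

lemma box_width_pos: "0 < N \<Longrightarrow> 0 < box_width N"
  by (simp add: box_width_def)

lemma box_width_le: "16 \<le> N \<Longrightarrow> box_width N \<le> 1/512"
  by (simp add: box_width_def divide_simps)

lemma test_support_sets [measurable]: "test_support N \<in> sets borel"
  unfolding test_support_def plus_box_def minus_box_def by measurable

lemma test_fn_borel_measurable [measurable]: "test_fn N \<in> borel_measurable lborel"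
  unfolding test_fn_def by measurable

lemma emeasure_test_support_finite: "emeasure lborel (test_support N) < \<infinity>"
proof -
  have "emeasure lborel (test_support N) \<le> emeasure lborel (plus_box N) + emeasure lborel (minus_box N)"
    unfolding test_support_def by (intro emeasure_subadditive) (auto simp: plus_box_def minus_box_def)
  also have "\<dots> < \<infinity>"
    unfolding plus_box_def minus_box_def using emeasure_rect_finite by (simp add: ennreal_add_less_top)
  finally show ?thesis .
qed

lemma measure_test_support_le: "0 < N \<Longrightarrow> measure lborel (test_support N) \<le> box_width N"
proof -
  assume N: "0 < N"
  have "measure lborel (test_support N) \<le> measure lborel (plus_box N) + measure lborel (minus_box N)"
    unfolding test_support_def by (intro measure_Un_le) (auto simp: plus_box_def minus_box_def)
  thus ?thesis using box_width_pos[OF N] by (simp add: plus_box_def minus_box_def measure_rect)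
qed

lemma output_interaction_in_boxes:
  assumes "16 \<le> N" "\<xi> \<in> output_box N" "\<eta> \<in> test_support N" "\<eta> - \<xi> \<in> test_support N"
  shows "\<eta> \<in> plus_box N \<and> \<eta> - \<xi> \<in> minus_box N"
  using assms box_width_le[of N] box_width_pos[of N]
  by (auto simp: output_box_def test_support_def plus_box_def minus_box_def mem_rect)

lemma resonant_interaction_in_boxes:
  assumes "16 \<le> N" "\<xi> \<in> output_box N" "\<eta> \<in> resonant_box N"
  shows "\<eta> \<in> plus_box N \<and> \<eta> - \<xi> \<in> minus_box N"
  using assms box_width_le[of N] box_width_pos[of N]
  by (auto simp: output_box_def resonant_box_def plus_box_def minus_box_def mem_rect)

lemma interaction_in_hull:
  assumes "16 \<le> N" "\<eta> \<in> test_support N" "\<eta> - \<xi> \<in> test_support N"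
  shows "\<xi> \<in> interaction_hull N"
  using assms box_width_le[of N] box_width_pos[of N]
  by (auto simp: interaction_hull_def test_support_def plus_box_def minus_box_def mem_rect)

lemma resonance_phase_bound:
  assumes N: "16 \<le> N" and x: "x \<in> plus_box N" and y: "y \<in> minus_box N"
  shows "\<bar>japbr (x - y) - (norm x)\<^sup>2 + (norm y)\<^sup>2\<bar> \<le> 1/2"
proof -
  define w where "w = box_width N"
  define D where "D = x$1 - y$1"
  define \<epsilon> where "\<epsilon> = x$1 + y$1 - 1"
  have w: "0 < w" "w \<le> 1/512" "N * w = 1/32"
    using box_width_pos[of N] box_width_le[OF N] N by (auto simp: w_def box_width_def)
  have x1: "N/2 + 1/2 \<le> x$1" "x$1 \<le> N/2 + 1/2 + 2*w" and x2: "0 \<le> x$2" "x$2 \<le> 1/4"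
    using x by (auto simp: plus_box_def mem_rect w_def)
  have y1: "1/2 - N/2 \<le> y$1" "y$1 \<le> 1/2 - N/2 + 2*w" and y2: "0 \<le> y$2" "y$2 \<le> 1/4"
    using y by (auto simp: minus_box_def mem_rect w_def)
  have D: "15 \<le> D" "D \<le> N + 2*w" and \<epsilon>: "0 \<le> \<epsilon>" "\<epsilon> \<le> 4*w"
    using x1 y1 w N by (auto simp: D_def \<epsilon>_def)
  have "D \<le> japbr (x - y) \<and> japbr (x - y) \<le> D + 1/8"
  proof
    show "D \<le> japbr (x - y)"
      using component_le_norm_cart[of "x - y" 1] norm_le_japbr[of "x - y"] by (simp add: D_def)
    have "(x$2 - y$2)\<^sup>2 \<le> 1"
      using x2 y2 by (intro power_le_one_iff[THEN iffD2] abs_square_le_1[THEN iffD2]) auto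
    hence "1 + (norm (x - y))\<^sup>2 \<le> (D + 1/8)\<^sup>2"
      using D unfolding power2_norm_eq_inner inner_vec_def sum_2 D_def
      by (simp add: power2_eq_square algebra_simps)
    hence "japbr (x - y) \<le> sqrt ((D + 1/8)\<^sup>2)"
      unfolding japbr_def by (rule real_sqrt_le_mono)
    thus "japbr (x - y) \<le> D + 1/8" using D by simp
  qed
  moreover have "0 \<le> D * \<epsilon>" "D * \<epsilon> \<le> 1/4"
  proof -
    show "0 \<le> D * \<epsilon>" using D \<epsilon> by simp
    have "D * \<epsilon> \<le> (N + 2*w) * (4*w)" using D \<epsilon> by (intro mult_mono) auto
    also have "\<dots> = 4 * (N * w) + 8 * w * w" by (simp add: algebra_simps)
    also have "\<dots> \<le> 4 * (1/32) + 8 * (1/512) * (1/512)"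
      using w mult_mono[of w "1/512" w "1/512"] by simp
    also have "\<dots> \<le> 1/4" by simp
    finally show "D * \<epsilon> \<le> 1/4" .
  qed
  moreover have "\<bar>(x$2)\<^sup>2 - (y$2)\<^sup>2\<bar> \<le> 1/16"
  proof -
    have "(x$2)\<^sup>2 \<le> 1/16" "(y$2)\<^sup>2 \<le> 1/16"
      using power_mono[of "x$2" "1/4" 2] power_mono[of "y$2" "1/4" 2] x2 y2 by (simp_all add: power_divide)
    thus ?thesis using zero_le_power2[of "x$2"] zero_le_power2[of "y$2"] by linarith
  qed
  moreover have "(norm x)\<^sup>2 - (norm y)\<^sup>2 = D + D * \<epsilon> + ((x$2)\<^sup>2 - (y$2)\<^sup>2)"
    unfolding power2_norm_eq_inner inner_vec_def sum_2 D_def \<epsilon>_def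
    by (simp add: power2_eq_square algebra_simps)
  ultimately show ?thesis by linarith
qed

lemma japbr_on_test_support:
  assumes N: "16 \<le> N" and \<eta>: "\<eta> \<in> test_support N"
  shows "N/4 \<le> japbr \<eta>" "japbr \<eta> \<le> 4 * N"
proof -
  have "N/4 \<le> \<bar>\<eta>$1\<bar>" "\<bar>\<eta>$1\<bar> \<le> N" "\<bar>\<eta>$2\<bar> \<le> 1"
    using \<eta> N box_width_le[OF N] box_width_pos[of N]
    by (auto simp: test_support_def plus_box_def minus_box_def mem_rect)
  thus "N/4 \<le> japbr \<eta>" "japbr \<eta> \<le> 4 * N"
    using component_le_norm_cart[of \<eta> 1] norm_le_japbr[of \<eta>] japbr_le_1_plus_norm[of \<eta>]
      norm_vec2_le_abs_components[of \<eta>] N by linarith+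
qed

lemma japbr_on_output_box:
  assumes N: "16 \<le> N" and \<xi>: "\<xi> \<in> output_box N"
  shows "N \<le> japbr \<xi>" "japbr \<xi> \<le> 2 * N" "N/2 \<le> (norm \<xi>)\<^sup>2 / japbr \<xi>"
proof -
  have "N \<le> \<bar>\<xi>$1\<bar>" "\<bar>\<xi>$1\<bar> \<le> N + 1" "\<bar>\<xi>$2\<bar> \<le> 1"
    using \<xi> N box_width_le[OF N] box_width_pos[of N] by (auto simp: output_box_def mem_rect)
  hence norm: "N \<le> norm \<xi>" and jp: "N \<le> japbr \<xi>" "japbr \<xi> \<le> 2 * N"
    using component_le_norm_cart[of \<xi> 1] norm_le_japbr[of \<xi>] japbr_le_1_plus_norm[of \<xi>]
      norm_vec2_le_abs_components[of \<xi>] N by linarith+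
  thus "N \<le> japbr \<xi>" "japbr \<xi> \<le> 2 * N" by simp_all
  have "N/2 = N\<^sup>2 / (2 * N)" using N by (simp add: power2_eq_square)
  also have "\<dots> \<le> (norm \<xi>)\<^sup>2 / japbr \<xi>"
    using norm jp N by (intro frac_le power_mono) auto
  finally show "N/2 \<le> (norm \<xi>)\<^sup>2 / japbr \<xi>" .
qed

lemma japbr_on_interaction_hull:
  assumes N: "16 \<le> N" and \<xi>: "\<xi> \<in> interaction_hull N"
  shows "japbr \<xi> \<le> 2 * N" "(norm \<xi>)\<^sup>2 / japbr \<xi> \<le> 2 * N"
proof -
  have "\<bar>\<xi>$1\<bar> \<le> N + 2" "\<bar>\<xi>$2\<bar> \<le> 1"
    using \<xi> by (auto simp: interaction_hull_def mem_rect)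
  thus "japbr \<xi> \<le> 2 * N"
    using japbr_le_1_plus_norm[of \<xi>] norm_vec2_le_abs_components[of \<xi>] N by linarith
  moreover have "(norm \<xi>)\<^sup>2 / japbr \<xi> \<le> japbr \<xi>"
    using norm_le_japbr[of \<xi>] japbr_ge_1[of \<xi>]
    by (simp add: divide_le_eq power2_eq_square mult_mono)
  ultimately show "(norm \<xi>)\<^sup>2 / japbr \<xi> \<le> 2 * N" by linarith
qed

lemma japbr_powr_on_test_support:
  assumes "16 \<le> N" "\<eta> \<in> test_support N"
  shows "N powr p / 4 powr \<bar>p\<bar> \<le> japbr \<eta> powr p" "japbr \<eta> powr p \<le> 4 powr \<bar>p\<bar> * N powr p"
  using powr_comparable_bounds[of N 4 "japbr \<eta>" p] japbr_on_test_support[OF assms] assms(1) by simp_all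

lemma sobolev_weight_test_fn:
  "japbr \<eta> powr (2*k) * (cmod (test_fn N \<eta>))\<^sup>2 = japbr \<eta> powr (2*k) * indicator (test_support N) \<eta>"
  by (simp add: test_fn_def indicator_def)

lemma test_fn_in_H: "16 \<le> N \<Longrightarrow> in_H k (test_fn N)"
  unfolding in_H_def sobolev_weight_test_fn
  by (intro conjI integrableI_bounded_set[where A = "test_support N" and B = "4 powr \<bar>2*k\<bar> * N powr (2*k)"]
      emeasure_test_support_finite AE_I2)
    (auto simp: japbr_powr_on_test_support(2))

lemma test_fn_sob_norm_pos: "16 \<le> N \<Longrightarrow> 0 < sob_norm k (test_fn N)"
proof -
  assume N: "16 \<le> N"
  have "0 < N powr (2*k) / 4 powr \<bar>2*k\<bar> * measure lborel (plus_box N)"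
    using N box_width_pos[of N] by (simp add: plus_box_def measure_rect)
  also have "\<dots> \<le> (LINT \<eta>|lborel. japbr \<eta> powr (2*k) * indicator (test_support N) \<eta>)"
  proof (rule integral_ge_mult_measure)
    show "integrable lborel (\<lambda>\<eta>. japbr \<eta> powr (2*k) * indicator (test_support N) \<eta>)"
      using test_fn_in_H[OF N, of k] by (simp add: in_H_def sobolev_weight_test_fn)
    show "emeasure lborel (plus_box N) < \<infinity>"
      unfolding plus_box_def by (rule emeasure_rect_finite)
    show "N powr (2*k) / 4 powr \<bar>2*k\<bar> \<le> japbr \<eta> powr (2*k) * indicator (test_support N) \<eta>"
      if "\<eta> \<in> plus_box N" for \<eta>
      using that japbr_powr_on_test_support(1)[OF N, of \<eta> "2*k"] by (simp add: test_support_def)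
  qed (auto simp: plus_box_def)
  finally show ?thesis by (simp add: sob_norm_def sobolev_weight_test_fn)
qed

lemma test_fn_sob_norm_sq_le:
  assumes N: "16 \<le> N"
  shows "(sob_norm k (test_fn N))\<^sup>2 \<le> 4 powr \<bar>2*k\<bar> * N powr (2*k - 1) / 32"
proof -
  define I where "I = (LINT \<eta>|lborel. japbr \<eta> powr (2*k) * indicator (test_support N) \<eta>)"
  have I: "0 \<le> I" unfolding I_def by (intro integral_nonneg_AE AE_I2) simp
  have "I = norm I" using I by simp
  also have "\<dots> \<le> 4 powr \<bar>2*k\<bar> * N powr (2*k) * measure lborel (test_support N)"
    unfolding I_def using japbr_powr_on_test_support(2)[OF N]
    by (intro norm_integral_le_mult_measure emeasure_test_support_finite) (auto simp: indicator_def)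
  also have "\<dots> \<le> 4 powr \<bar>2*k\<bar> * N powr (2*k) * box_width N"
    using measure_test_support_le[of N] N by (intro mult_left_mono) auto
  also have "\<dots> = 4 powr \<bar>2*k\<bar> * N powr (2*k - 1) / 32"
    using N by (simp add: box_width_def powr_diff)
  finally show ?thesis
    using I by (simp add: sob_norm_def sobolev_weight_test_fn I_def)
qed

definition schr_test_integrand :: "real \<Rightarrow> real \<Rightarrow> real^2 \<Rightarrow> real^2 \<Rightarrow> complex" where
  "schr_test_integrand N s \<xi> \<eta> =
     cis (- s * (norm \<eta>)\<^sup>2) * test_fn N \<eta> * cnj (cis (- s * (norm (\<eta> - \<xi>))\<^sup>2) * test_fn N (\<eta> - \<xi>))"

lemma schr_prod_hat_test_fn:
  "schr_prod_hat (test_fn N) s \<xi> = complex_of_real (1 / (2*pi)\<^sup>2) * (LINT \<eta>|lborel. schr_test_integrand N s \<xi> \<eta>)"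
  unfolding schr_prod_hat_def schr_test_integrand_def ..

lemma schr_test_integrand_borel_measurable [measurable]:
  "schr_test_integrand N s \<xi> \<in> borel_measurable lborel"
  unfolding schr_test_integrand_def by measurable

lemma norm_schr_test_integrand_le: "norm (schr_test_integrand N s \<xi> \<eta>) \<le> indicator (test_support N) \<eta>"
  by (simp add: schr_test_integrand_def test_fn_def indicator_def norm_mult)

lemma integrable_schr_test_integrand: "integrable lborel (schr_test_integrand N s \<xi>)"
  by (intro integrableI_bounded_set[where A = "test_support N" and B = 1] emeasure_test_support_finite AE_I2)
    (auto simp: schr_test_integrand_def test_fn_def norm_mult indicator_def)

lemma schr_test_integrand_rotated:
  "cis (s * japbr \<xi>) * schr_test_integrand N s \<xi> \<eta> =
     (if \<eta> \<in> test_support N \<and> \<eta> - \<xi> \<in> test_support N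
      then cis (s * (japbr \<xi> - (norm \<eta>)\<^sup>2 + (norm (\<eta> - \<xi>))\<^sup>2)) else 0)"
proof -
  have "cis (s * japbr \<xi>) * (cis (- s * (norm \<eta>)\<^sup>2) * cis (s * (norm (\<eta> - \<xi>))\<^sup>2))
      = cis (s * (japbr \<xi> - (norm \<eta>)\<^sup>2 + (norm (\<eta> - \<xi>))\<^sup>2))"
    by (simp add: cis_mult algebra_simps)
  thus ?thesis by (auto simp: schr_test_integrand_def test_fn_def cis_cnj)
qed

lemma schr_prod_hat_test_fn_norm_le:
  "0 < N \<Longrightarrow> norm (schr_prod_hat (test_fn N) s \<xi>) \<le> box_width N / (2*pi)\<^sup>2"
proof -
  assume N: "0 < N"
  have "norm (LINT \<eta>|lborel. schr_test_integrand N s \<xi> \<eta>) \<le> 1 * measure lborel (test_support N)"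
    using norm_schr_test_integrand_le by (intro norm_integral_le_mult_measure emeasure_test_support_finite) auto
  hence "norm (LINT \<eta>|lborel. schr_test_integrand N s \<xi> \<eta>) \<le> box_width N"
    using measure_test_support_le[OF N] by simp
  hence "1 / (2*pi)\<^sup>2 * norm (LINT \<eta>|lborel. schr_test_integrand N s \<xi> \<eta>) \<le> 1 / (2*pi)\<^sup>2 * box_width N"
    by (intro mult_left_mono) auto
  thus ?thesis by (simp add: schr_prod_hat_test_fn norm_mult norm_divide norm_power)
qed

lemma schr_prod_hat_test_fn_outside_hull:
  "16 \<le> N \<Longrightarrow> \<xi> \<notin> interaction_hull N \<Longrightarrow> schr_prod_hat (test_fn N) s \<xi> = 0"
proof -
  assume "16 \<le> N" "\<xi> \<notin> interaction_hull N"
  hence "schr_test_integrand N s \<xi> = (\<lambda>\<eta>. 0)"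
    using interaction_in_hull[of N _ \<xi>]
    by (intro ext) (auto simp: schr_test_integrand_def test_fn_def indicator_def)
  thus ?thesis by (simp add: schr_prod_hat_test_fn)
qed

lemma schr_prod_hat_test_fn_resonant:
  assumes N: "16 \<le> N" and \<xi>: "\<xi> \<in> output_box N" and s: "0 \<le> s" "s \<le> 1"
  shows "box_width N / (16 * (2*pi)\<^sup>2) \<le> Re (cis (s * japbr \<xi>) * schr_prod_hat (test_fn N) s \<xi>)"
proof -
  define h where "h \<eta> = cis (s * japbr \<xi>) * schr_test_integrand N s \<xi> \<eta>" for \<eta>
  have interacting: "1/2 \<le> Re (h \<eta>)" if "\<eta> \<in> plus_box N" "\<eta> - \<xi> \<in> minus_box N" for \<eta>
  proof -
    have "\<bar>s * (japbr \<xi> - (norm \<eta>)\<^sup>2 + (norm (\<eta> - \<xi>))\<^sup>2)\<bar> \<le> 1 * (1/2)"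
      using resonance_phase_bound[OF N that] s unfolding abs_mult by (intro mult_mono) auto
    hence "1/2 \<le> cos (s * (japbr \<xi> - (norm \<eta>)\<^sup>2 + (norm (\<eta> - \<xi>))\<^sup>2))"
      by (intro cos_ge_half) simp
    thus ?thesis
      using that by (simp add: h_def schr_test_integrand_rotated test_support_def)
  qed
  have "1/2 * measure lborel (resonant_box N) \<le> Re (LINT \<eta>|lborel. h \<eta>)"
  proof (rule Re_integral_ge_mult_measure)
    show "integrable lborel h"
      unfolding h_def by (intro integrable_mult_right integrable_schr_test_integrand)
    show "emeasure lborel (resonant_box N) < \<infinity>"
      unfolding resonant_box_def by (rule emeasure_rect_finite)
    show "1/2 \<le> Re (h \<eta>)" if "\<eta> \<in> resonant_box N" for \<eta>
      using interacting resonant_interaction_in_boxes[OF N \<xi> that] by simp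
    show "0 \<le> Re (h \<eta>)" for \<eta>
      using interacting[of \<eta>] output_interaction_in_boxes[OF N \<xi>, of \<eta>]
      by (cases "\<eta> \<in> test_support N \<and> \<eta> - \<xi> \<in> test_support N")
        (auto simp: h_def schr_test_integrand_rotated)
  qed (simp add: resonant_box_def)
  moreover have "measure lborel (resonant_box N) = box_width N / 8"
    using box_width_pos[of N] N by (simp add: resonant_box_def measure_rect)
  ultimately have "1 / (2*pi)\<^sup>2 * (box_width N / 16) \<le> 1 / (2*pi)\<^sup>2 * Re (LINT \<eta>|lborel. h \<eta>)"
    by (intro mult_left_mono) auto
  also have "\<dots> = Re (cis (s * japbr \<xi>) * schr_prod_hat (test_fn N) s \<xi>)"
    by (simp add: h_def schr_prod_hat_test_fn)
  finally show ?thesis by simp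
qed

lemma schr_prod_hat_borel_measurable [measurable]:
  assumes [measurable]: "u \<in> borel_measurable lborel"
  shows "(\<lambda>s. schr_prod_hat u s \<xi>) \<in> borel_measurable lborel"
  unfolding schr_prod_hat_def by measurable

lemma duhamel_hat_as_integral:
  "0 \<le> t \<Longrightarrow> duhamel_hat u t \<xi> = (LINT s|lborel. indicator {0..t} s *\<^sub>R
     (cis (- (t - s) * japbr \<xi>) * complex_of_real (- ((norm \<xi>)\<^sup>2 / japbr \<xi>)) * schr_prod_hat u s \<xi>))"
  unfolding duhamel_hat_def by (simp add: interval_integral_Icc set_lebesgue_integral_def)

lemma duhamel_hat_eq_0: "(\<And>s. schr_prod_hat u s \<xi> = 0) \<Longrightarrow> duhamel_hat u t \<xi> = 0"
  by (simp add: duhamel_hat_def)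

lemma norm_duhamel_hat_le:
  assumes t: "0 \<le> t" and B: "\<And>s. norm (schr_prod_hat u s \<xi>) \<le> B"
  shows "norm (duhamel_hat u t \<xi>) \<le> t * ((norm \<xi>)\<^sup>2 / japbr \<xi> * B)"
proof -
  define q where "q = (norm \<xi>)\<^sup>2 / japbr \<xi>"
  have q: "0 \<le> q" unfolding q_def using japbr_ge_1[of \<xi>] by simp
  have "norm (duhamel_hat u t \<xi>) \<le> q * B * measure lborel {0..t}"
    unfolding duhamel_hat_as_integral[OF t] q_def[symmetric]
    by (rule norm_integral_le_mult_measure)
      (use B q in \<open>auto simp: norm_cis_mult_of_real_mult indicator_def emeasure_lborel_Icc_eq mult_left_mono\<close>)
  thus ?thesis using t by (simp add: q_def mult.commute)
qed

lemma norm_duhamel_hat_ge: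
  assumes u: "u \<in> borel_measurable lborel" and t: "0 \<le> t"
    and B: "\<And>s. norm (schr_prod_hat u s \<xi>) \<le> B" and \<beta>: "0 \<le> \<beta>"
    and resonant: "\<And>s. s \<in> {0..t} \<Longrightarrow> \<beta> \<le> Re (cis (s * japbr \<xi>) * schr_prod_hat u s \<xi>)"
  shows "t * ((norm \<xi>)\<^sup>2 / japbr \<xi> * \<beta>) \<le> norm (duhamel_hat u t \<xi>)"
proof -
  define q where "q = (norm \<xi>)\<^sup>2 / japbr \<xi>"
  define F where "F s = indicator {0..t} s *\<^sub>R
     (cis (- (t - s) * japbr \<xi>) * complex_of_real (- q) * schr_prod_hat u s \<xi>)" for s
  define w where "w = - cis (t * japbr \<xi>)"
  have q: "0 \<le> q" unfolding q_def using japbr_ge_1[of \<xi>] by simp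
  have F_rotated: "w * F s = indicator {0..t} s *\<^sub>R (complex_of_real q * (cis (s * japbr \<xi>) * schr_prod_hat u s \<xi>))" for s
  proof -
    have "w * F s = indicator {0..t} s *\<^sub>R
        (w * cis (- (t - s) * japbr \<xi>) * complex_of_real (- q) * schr_prod_hat u s \<xi>)"
      by (simp only: F_def mult_scaleR_right mult.assoc)
    also have "w * cis (- (t - s) * japbr \<xi>) = - cis (s * japbr \<xi>)"
      unfolding w_def by (simp add: cis_mult algebra_simps)
    finally show ?thesis by simp
  qed
  have "integrable lborel F"
    unfolding F_def using u B q
    by (intro integrableI_bounded_set_indicator[where B = "q * B"] AE_I2)
      (auto simp: emeasure_lborel_Icc_eq norm_cis_mult_of_real_mult mult_left_mono)
  hence "q * \<beta> * measure lborel {0..t} \<le> Re (LINT s|lborel. w * F s)"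
  proof (intro Re_integral_ge_mult_measure integrable_mult_right)
    show "q * \<beta> \<le> Re (w * F s)" if "s \<in> {0..t}" for s
      using that resonant[OF that] q by (simp add: F_rotated mult_left_mono)
    show "0 \<le> Re (w * F s)" for s
      using mult_nonneg_nonneg[OF q order_trans[OF \<beta> resonant[of s]]] by (simp add: F_rotated indicator_def)
  qed (simp_all add: emeasure_lborel_Icc_eq)
  also have "\<dots> = Re (w * duhamel_hat u t \<xi>)"
    unfolding duhamel_hat_as_integral[OF t] F_def q_def integral_mult_right_zero ..
  also have "\<dots> \<le> norm (w * duhamel_hat u t \<xi>)"
    by (rule complex_Re_le_cmod)
  finally show ?thesis
    using t by (simp add: w_def norm_mult q_def mult.commute)
qed

lemma duhamel_hat_test_fn_outside_hull:
  "16 \<le> N \<Longrightarrow> \<xi> \<notin> interaction_hull N \<Longrightarrow> duhamel_hat (test_fn N) t \<xi> = 0"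
  by (intro duhamel_hat_eq_0 schr_prod_hat_test_fn_outside_hull)

lemma norm_duhamel_hat_test_fn_ge:
  assumes N: "16 \<le> N" and T: "0 \<le> T" "T \<le> 1" and \<xi>: "\<xi> \<in> output_box N"
  shows "T / (1024 * (2*pi)\<^sup>2) \<le> norm (duhamel_hat (test_fn N) T \<xi>)"
proof -
  have "T * (N/2 * (box_width N / (16 * (2*pi)\<^sup>2))) \<le> T * ((norm \<xi>)\<^sup>2 / japbr \<xi> * (box_width N / (16 * (2*pi)\<^sup>2)))"
    using japbr_on_output_box(3)[OF N \<xi>] T box_width_pos[of N] N
    by (intro mult_left_mono mult_right_mono) auto
  also have "\<dots> \<le> norm (duhamel_hat (test_fn N) T \<xi>)"
    using N T box_width_pos[of N]
    by (intro norm_duhamel_hat_ge[where B = "box_width N / (2*pi)\<^sup>2"] schr_prod_hat_test_fn_norm_le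
        schr_prod_hat_test_fn_resonant[OF N \<xi>]) auto
  finally show ?thesis using N by (simp add: box_width_def)
qed

lemma integrable_sobolev_weight_duhamel_test_fn:
  assumes N: "16 \<le> N" and T: "0 \<le> T"
  shows "integrable lborel (\<lambda>\<xi>. japbr \<xi> powr (2*l) * (cmod (duhamel_hat (test_fn N) T \<xi>))\<^sup>2)"
proof (rule integrableI_bounded_set[where A = "interaction_hull N"
      and B = "(2*N) powr \<bar>2*l\<bar> * (T * (2*N * (box_width N / (2*pi)\<^sup>2)))\<^sup>2"])
  show "(\<lambda>\<xi>. japbr \<xi> powr (2*l) * (cmod (duhamel_hat (test_fn N) T \<xi>))\<^sup>2) \<in> borel_measurable lborel"
    unfolding duhamel_hat_def schr_prod_hat_def interval_lebesgue_integral_def set_lebesgue_integral_def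
    by measurable
  show "AE \<xi> in lborel. \<xi> \<notin> interaction_hull N \<longrightarrow> japbr \<xi> powr (2*l) * (cmod (duhamel_hat (test_fn N) T \<xi>))\<^sup>2 = 0"
    using duhamel_hat_test_fn_outside_hull[OF N] by simp
  show "AE \<xi> in lborel. \<xi> \<in> interaction_hull N \<longrightarrow> norm (japbr \<xi> powr (2*l) * (cmod (duhamel_hat (test_fn N) T \<xi>))\<^sup>2)
      \<le> (2*N) powr \<bar>2*l\<bar> * (T * (2*N * (box_width N / (2*pi)\<^sup>2)))\<^sup>2"
  proof (intro AE_I2 impI)
    fix \<xi> assume \<xi>: "\<xi> \<in> interaction_hull N"
    have "japbr \<xi> powr (2*l) \<le> (2*N) powr \<bar>2*l\<bar>"
      using japbr_ge_1[of \<xi>] japbr_on_interaction_hull(1)[OF N \<xi>]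
      by (intro order_trans[OF powr_mono powr_mono2]) auto
    moreover have "cmod (duhamel_hat (test_fn N) T \<xi>) \<le> T * (2*N * (box_width N / (2*pi)\<^sup>2))"
    proof (rule order_trans[OF norm_duhamel_hat_le[OF T schr_prod_hat_test_fn_norm_le]])
      show "T * ((norm \<xi>)\<^sup>2 / japbr \<xi> * (box_width N / (2*pi)\<^sup>2)) \<le> T * (2*N * (box_width N / (2*pi)\<^sup>2))"
        using japbr_on_interaction_hull(2)[OF N \<xi>] T N box_width_pos[of N]
        by (intro mult_left_mono mult_right_mono) auto
    qed (use N in simp)
    ultimately show "norm (japbr \<xi> powr (2*l) * (cmod (duhamel_hat (test_fn N) T \<xi>))\<^sup>2)
        \<le> (2*N) powr \<bar>2*l\<bar> * (T * (2*N * (box_width N / (2*pi)\<^sup>2)))\<^sup>2"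
      by (simp add: mult_mono power_mono)
  qed
next
  show "emeasure lborel (interaction_hull N) < \<infinity>"
    unfolding interaction_hull_def by (rule emeasure_rect_finite)
qed (simp add: interaction_hull_def)

lemma duhamel_test_fn_sob_norm_ge:
  assumes N: "16 \<le> N" and T: "0 \<le> T" "T \<le> 1"
  shows "T / (16384 * (2*pi)\<^sup>2 * 2 powr \<bar>l\<bar>) * N powr (l - 1/2) \<le> sob_norm l (duhamel_hat (test_fn N) T)"
proof -
  define A where "A = T / (1024 * (2*pi)\<^sup>2)"
  have "N powr (2*l) / 2 powr \<bar>2*l\<bar> * A\<^sup>2 * measure lborel (output_box N)
      \<le> (LINT \<xi>|lborel. japbr \<xi> powr (2*l) * (cmod (duhamel_hat (test_fn N) T \<xi>))\<^sup>2)"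
  proof (rule integral_ge_mult_measure[OF integrable_sobolev_weight_duhamel_test_fn[OF N T(1)]])
    show "N powr (2*l) / 2 powr \<bar>2*l\<bar> * A\<^sup>2 \<le> japbr \<xi> powr (2*l) * (cmod (duhamel_hat (test_fn N) T \<xi>))\<^sup>2"
      if \<xi>: "\<xi> \<in> output_box N" for \<xi>
    proof (intro mult_mono)
      show "N powr (2*l) / 2 powr \<bar>2*l\<bar> \<le> japbr \<xi> powr (2*l)"
        using powr_comparable_bounds(1)[of N 2 "japbr \<xi>" "2*l"] japbr_on_output_box[OF N \<xi>] N by simp
      show "A\<^sup>2 \<le> (cmod (duhamel_hat (test_fn N) T \<xi>))\<^sup>2"
        using norm_duhamel_hat_test_fn_ge[OF N T \<xi>] T by (intro power_mono) (auto simp: A_def)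
    qed auto
    show "emeasure lborel (output_box N) < \<infinity>"
      unfolding output_box_def by (rule emeasure_rect_finite)
  qed (auto simp: output_box_def)
  moreover have "measure lborel (output_box N) = 1 / (256 * N)"
    using N by (simp add: output_box_def measure_rect box_width_def)
  moreover have "N powr (2*l) / 2 powr \<bar>2*l\<bar> * A\<^sup>2 * (1 / (256 * N))
      = (T / (16384 * (2*pi)\<^sup>2 * 2 powr \<bar>l\<bar>) * N powr (l - 1/2))\<^sup>2"
  proof -
    have "(N powr (l - 1/2))\<^sup>2 = N powr (2*l) / N"
      using N by (simp add: power2_eq_square powr_diff flip: powr_add)
    moreover have "(2 powr \<bar>l\<bar>)\<^sup>2 = 2 powr \<bar>2*l\<bar>"
      by (simp add: power2_eq_square abs_mult flip: powr_add)
    ultimately show ?thesis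
      using N by (simp add: A_def power_mult_distrib power_divide mult_ac)
  qed
  ultimately show ?thesis
    using N T unfolding sob_norm_def by (intro real_le_rsqrt) simp
qed

lemma duhamel_test_fn_norm_inflation:
  assumes N: "16 \<le> N" and T: "0 \<le> T" "T \<le> 1"
  shows "T / (512 * (2*pi)\<^sup>2 * 2 powr \<bar>l\<bar> * 4 powr \<bar>2*k\<bar>) * N powr (l - 2*k + 1/2)
           * (sob_norm k (test_fn N))\<^sup>2 \<le> sob_norm l (duhamel_hat (test_fn N) T)"
proof -
  define c where "c = T / (512 * (2*pi)\<^sup>2 * 2 powr \<bar>l\<bar> * 4 powr \<bar>2*k\<bar>)"
  have "c * N powr (l - 2*k + 1/2) * (sob_norm k (test_fn N))\<^sup>2
      \<le> c * N powr (l - 2*k + 1/2) * (4 powr \<bar>2*k\<bar> * N powr (2*k - 1) / 32)"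
    using test_fn_sob_norm_sq_le[OF N] T by (intro mult_left_mono) (auto simp: c_def)
  also have "\<dots> = T / (16384 * (2*pi)\<^sup>2 * 2 powr \<bar>l\<bar>) * N powr (l - 1/2)"
    using N by (simp add: c_def field_simps flip: powr_add)
  also have "\<dots> \<le> sob_norm l (duhamel_hat (test_fn N) T)"
    by (rule duhamel_test_fn_sob_norm_ge[OF N T])
  finally show ?thesis unfolding c_def .
qed

theorem proposition6p6:
  fixes k l T :: real
  assumes "0 < T" and "T \<le> 1"
  shows "\<exists>N0 c. N0 > 0 \<and> c > 0 \<and>
    (\<forall>j::nat. (2::real) ^ j \<ge> N0 \<longrightarrow>
      (\<exists>uhat :: real^2 \<Rightarrow> complex. in_H k uhat \<and> sob_norm k uhat > 0 \<and>
         (SUP t\<in>{-T..T}. ereal (sob_norm l (duhamel_hat uhat t)))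
           \<ge> ereal (c * ((2::real) ^ j) powr (l - 2*k + 1/2) * (sob_norm k uhat)\<^sup>2)))"
proof -
  define c where "c = T / (512 * (2*pi)\<^sup>2 * 2 powr \<bar>l\<bar> * 4 powr \<bar>2*k\<bar>)"
  have inflation: "ereal (c * N powr (l - 2*k + 1/2) * (sob_norm k (test_fn N))\<^sup>2)
      \<le> (SUP t\<in>{-T..T}. ereal (sob_norm l (duhamel_hat (test_fn N) t)))" if N: "16 \<le> N" for N
  proof -
    have "ereal (c * N powr (l - 2*k + 1/2) * (sob_norm k (test_fn N))\<^sup>2)
        \<le> ereal (sob_norm l (duhamel_hat (test_fn N) T))"
      unfolding c_def using duhamel_test_fn_norm_inflation[OF N] assms by simp
    also have "\<dots> \<le> (SUP t\<in>{-T..T}. ereal (sob_norm l (duhamel_hat (test_fn N) t)))"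
      using assms by (intro SUP_upper) simp
    finally show ?thesis .
  qed
  show ?thesis
  proof (rule exI[of _ 16], rule exI[of _ c], intro conjI allI impI exI)
    show "c > 0" using assms by (simp add: c_def)
    fix j :: nat
    assume N: "16 \<le> (2::real) ^ j"
    show "in_H k (test_fn (2 ^ j))" "sob_norm k (test_fn (2 ^ j)) > 0"
      using test_fn_in_H[OF N] test_fn_sob_norm_pos[OF N] by auto
    show "ereal (c * (2 ^ j) powr (l - 2*k + 1/2) * (sob_norm k (test_fn (2 ^ j)))\<^sup>2)
        \<le> (SUP t\<in>{-T..T}. ereal (sob_norm l (duhamel_hat (test_fn (2 ^ j)) t)))"
      by (rule inflation[OF N])
  qed simp
qed

end
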